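(* Let $\{\gamma_k\}_{k=0}^{\infty}$ be a sequence of non-negative real numbers which is a non-trivial Legendre multiplier sequence. Then $\gamma_k \le \gamma_{k+1}$ for all $k \ge 0$. *)

theory Defs
  imports "HOL-Computational_Algebra.Polynomial" Complex_Main
begin

fun legendre :: "nat \<Rightarrow> real poly" where
  "legendre 0 = 1"
| "legendre (Suc 0) = [:0, 1:]"
| "legendre (Suc (Suc n)) =
     smult (1 / real (n + 2))
       (smult (real (2 * n + 3)) ([:0, 1:] * legendre (Suc n)) - smult (real (n + 1)) (legendre n))"

text \<open>A real polynomial has only real zeros (the zero polynomial is counted as such,
  following the standard convention of the multiplier-sequence literature).\<close>
definition real_rooted :: "real poly \<Rightarrow> bool" where
  "real_rooted p \<longleftrightarrow> p = 0 \<or> (\<forall>z::complex. poly (map_poly of_real p) z = 0 \<longrightarrow> z \<in> \<real>)"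

text \<open>Legendre multiplier sequence: the operator sum a_k P_k \<mapsto> sum gamma_k a_k P_k
  maps every real polynomial with only real zeros to one with only real zeros.
  (Every real polynomial has a unique expansion in the Legendre basis.)\<close>
definition legendre_multiplier_sequence :: "(nat \<Rightarrow> real) \<Rightarrow> bool" where
  "legendre_multiplier_sequence \<gamma> \<longleftrightarrow>
     (\<forall>n (a :: nat \<Rightarrow> real).
        real_rooted (\<Sum>k\<le>n. smult (a k) (legendre k)) \<longrightarrow>
        real_rooted (\<Sum>k\<le>n. smult (\<gamma> k * a k) (legendre k)))"

definition trivial_sequence :: "(nat \<Rightarrow> real) \<Rightarrow> bool" where
  "trivial_sequence \<gamma> \<longleftrightarrow> finite {k. \<gamma> k \<noteq> 0} \<and> card {k. \<gamma> k \<noteq> 0} \<le> 2"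

end

theory Submission
  imports Defs "HOL-Computational_Algebra.Fundamental_Theorem_Algebra"
begin

text \<open>Write \<open>T\<close> for the multiplier operator \<open>\<Sum>k. a k P k \<mapsto> \<Sum>k. \<gamma> k a k P k\<close>.
  Applying \<open>T\<close> to \<open>(x - r)^(m+2)\<close> and feeding the top three coefficients of the image into
  Newton's inequality for real-rooted polynomials gives an inequality \<open>0 \<le> A r\<^sup>2 + B\<close> valid
  for all \<open>r\<close>. When \<open>\<gamma>(m+2) > 0\<close>, \<open>B \<ge> 0\<close> says \<open>\<gamma> m \<le> \<gamma>(m+2)\<close> and \<open>A \<ge> 0\<close> is the Turan
  inequality \<open>\<gamma>(m+2) \<gamma> m \<le> \<gamma>(m+1)\<^sup>2\<close>; together
  \<open>\<gamma> k\<^sup>2 \<le> \<gamma>(k+2) \<gamma> k \<le> \<gamma>(k+1)\<^sup>2\<close>, provided positivity propagates from \<open>\<gamma> k\<close> to \<open>\<gamma>(k+1)\<close>.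

  Positivity propagates because otherwise the support of \<open>\<gamma>\<close> has a gap that \<open>T\<close> can exploit:
  a Legendre polynomial alternates in sign at interlacing points, so small perturbations of it stay
  real-rooted, and \<open>T\<close> maps a suitable perturbation to a sparse polynomial \<open>\<epsilon> P + R\<close> with
  \<open>degree R + 3 \<le> degree P\<close> (or to one violating Newton's inequality). But in a real-rooted
  polynomial every coefficient is bounded in terms of the top three, which forces \<open>R = 0\<close>
  as \<open>\<epsilon> \<rightarrow> 0\<close>. Non-triviality supplies the non-zero terms this needs.\<close>

section \<open>Real-rooted polynomials\<close>

lemma smult_sum_right: "smult c (\<Sum>i\<in>A. f i) = (\<Sum>i\<in>A. smult c (f i))"
  by (induction A rule: infinite_finite_induct) (simp_all add: smult_add_right)

lemma map_poly_of_real_mult: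
  "map_poly (of_real :: real \<Rightarrow> complex) (p * q) = map_poly of_real p * map_poly of_real q"
  by (simp add: poly_eq_iff coeff_map_poly coeff_mult)

lemma poly_map_poly_of_real:
  "poly (map_poly (of_real :: real \<Rightarrow> complex) p) (of_real x) = of_real (poly p x)"
  by (induction p) (auto simp: map_poly_pCons)

lemma real_rooted_smult_iff:
  assumes "c \<noteq> 0"
  shows "real_rooted (smult c p) \<longleftrightarrow> real_rooted p"
proof -
  have "map_poly (of_real :: real \<Rightarrow> complex) (smult c p) = smult (of_real c) (map_poly of_real p)"
    by (simp add: poly_eq_iff coeff_map_poly)
  then show ?thesis
    using assms unfolding real_rooted_def by auto
qed

lemma real_rooted_linear_mult:
  assumes "real_rooted s"
  shows "real_rooted ([:-r, 1:] * s)"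
proof -
  have "map_poly (of_real :: real \<Rightarrow> complex) [:-r, 1:] = [:-of_real r, 1:]"
    by (simp add: map_poly_pCons)
  then show ?thesis
    using assms unfolding real_rooted_def map_poly_of_real_mult by (auto simp: algebra_simps)
qed

lemma real_rooted_linear_power: "real_rooted ([:-r, 1:] ^ n)"
proof (induction n)
  case (Suc n)
  then show ?case unfolding power_Suc by (rule real_rooted_linear_mult)
qed (simp add: real_rooted_def)

lemma real_rooted_linear_factor:
  assumes "real_rooted p" "degree p = Suc d"
  obtains r s where "p = [:-r, 1:] * s" "real_rooted s" "s \<noteq> 0" "degree s = d"
proof -
  let ?P = "map_poly (of_real :: real \<Rightarrow> complex) p"
  have "p \<noteq> 0" using assms(2) by auto
  have "degree ?P = Suc d" using assms(2) by (simp add: degree_map_poly)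
  then obtain z where z: "poly ?P z = 0"
    using fundamental_theorem_of_algebra constant_degree by (metis nat.simps(3))
  have "z \<in> \<real>" using assms(1) \<open>p \<noteq> 0\<close> z unfolding real_rooted_def by blast
  then obtain r where zr: "z = of_real r" by (auto elim: Reals_cases)
  have "poly p r = 0" using z unfolding zr poly_map_poly_of_real by simp
  then obtain s where ps: "p = [:-r, 1:] * s" using poly_eq_0_iff_dvd by (metis dvdE)
  have "s \<noteq> 0" using \<open>p \<noteq> 0\<close> ps by auto
  then have "degree s = d" using assms(2) unfolding ps by (subst (asm) degree_mult_eq) auto
  have "real_rooted s" unfolding real_rooted_def
  proof (intro disjI2 allI impI)
    fix w assume "poly (map_poly of_real s) w = (0::complex)"
    then have "poly ?P w = 0" unfolding ps map_poly_of_real_mult by simp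
    then show "w \<in> \<real>" using assms(1) \<open>p \<noteq> 0\<close> unfolding real_rooted_def by blast
  qed
  then show thesis using that ps \<open>s \<noteq> 0\<close> \<open>degree s = d\<close> by blast
qed

definition coeff_from_top :: "'a::zero poly \<Rightarrow> nat \<Rightarrow> 'a" where
  "coeff_from_top p k = (if k \<le> degree p then coeff p (degree p - k) else 0)"

lemma coeff_from_top_0 [simp]: "coeff_from_top p 0 = lead_coeff p"
  by (simp add: coeff_from_top_def)

lemma coeff_from_top_linear_mult:
  fixes s :: "'a::idom poly"
  assumes "s \<noteq> 0"
  shows "coeff_from_top ([:-r, 1:] * s) (Suc k) = coeff_from_top s (Suc k) - r * coeff_from_top s k"
proof -
  have deg: "degree ([:-r, 1:] * s) = Suc (degree s)"
    using assms by (subst degree_mult_eq) auto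
  have "coeff ([:-r, 1:] * s) i = (if i = 0 then 0 else coeff s (i - 1)) - r * coeff s i" for i
    by (cases i) (simp_all add: mult_pCons_left coeff_pCons)
  then show ?thesis
    unfolding coeff_from_top_def deg by (auto simp: Suc_diff_Suc)
qed

lemma newton_inequality:
  fixes p :: "real poly"
  assumes "real_rooted p"
  shows "2 * real (degree p) * lead_coeff p * coeff_from_top p 2
           \<le> (real (degree p) - 1) * coeff_from_top p 1 ^ 2"
  using assms
proof (induction "degree p" arbitrary: p)
  case 0
  then show ?case by (simp add: coeff_from_top_def)
next
  case (Suc d)
  obtain r s where ps: "p = [:-r, 1:] * s" and s: "real_rooted s" "s \<noteq> 0" "degree s = d"
    using real_rooted_linear_factor[OF Suc.prems Suc.hyps(2)[symmetric]] by blast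
  define L t1 t2 where "L = lead_coeff s" and "t1 = coeff_from_top s 1" and "t2 = coeff_from_top s 2"
  have IH: "2 * real d * L * t2 \<le> (real d - 1) * t1 ^ 2"
    using Suc.hyps(1)[OF s(3)[symmetric] s(1)] s(3) by (simp add: L_def t1_def t2_def)
  have "real d * (2 * real (Suc d) * L * (t2 - r * t1))
          \<le> real d * (real d * (t1 - r * L) ^ 2)"
  proof -
    \<comment> \<open>The difference of the two sides is a sum of a square and the induction hypothesis.\<close>
    have "real d * (real d * (t1 - r * L) ^ 2 - 2 * real (Suc d) * L * (t2 - r * t1))
        = (t1 + real d * r * L) ^ 2 + real (Suc d) * ((real d - 1) * t1 ^ 2 - 2 * real d * L * t2)"
      by (simp add: algebra_simps power2_eq_square)
    also have "\<dots> \<ge> 0" using IH by simp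
    finally show ?thesis by (simp add: algebra_simps)
  qed
  moreover have "d = 0 \<Longrightarrow> t2 - r * t1 = 0"
    using s(3) by (simp add: t1_def t2_def coeff_from_top_def)
  ultimately have "2 * real (Suc d) * L * (t2 - r * t1) \<le> real d * (t1 - r * L) ^ 2"
    by (cases "d = 0") (auto simp: mult_le_cancel_left_pos)
  moreover have "degree p = Suc d" "lead_coeff p = L"
    using Suc.hyps(2) unfolding ps lead_coeff_mult by (simp_all add: L_def)
  moreover have "coeff_from_top p 1 = t1 - r * L" "coeff_from_top p 2 = t2 - r * t1"
    using coeff_from_top_linear_mult[OF s(2), of r 0] coeff_from_top_linear_mult[OF s(2), of r 1]
    by (simp_all add: ps L_def t1_def t2_def numeral_2_eq_2)
  ultimately show ?case by simp
qed

lemma real_rooted_top_coeffs: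
  fixes p :: "real poly"
  assumes "real_rooted p" "coeff_from_top p 1 = 0"
  shows "lead_coeff p * coeff_from_top p 2 \<le> 0"
proof (cases "degree p = 0")
  case True
  then show ?thesis by (simp add: coeff_from_top_def)
next
  case False
  have "2 * real (degree p) * (lead_coeff p * coeff_from_top p 2) \<le> 2 * real (degree p) * 0"
    using newton_inequality[OF assms(1)] assms(2) by (simp add: mult.assoc)
  then show ?thesis
    using False by (simp add: mult_le_0_iff)
qed

text \<open>By Newton's identities, for a real-rooted \<open>p \<noteq> 0\<close> this is the sum of the squares of
  the roots of \<open>p\<close>, counted with multiplicity.\<close>
definition root_square_sum :: "real poly \<Rightarrow> real" where
  "root_square_sum p =
     (coeff_from_top p 1 ^ 2 - 2 * lead_coeff p * coeff_from_top p 2) / lead_coeff p ^ 2"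

lemma root_square_sum_nonneg:
  assumes "real_rooted p"
  shows "root_square_sum p \<ge> 0"
proof -
  have "2 * lead_coeff p * coeff_from_top p 2 \<le> coeff_from_top p 1 ^ 2"
  proof (cases "degree p = 0")
    case True
    then show ?thesis by (simp add: coeff_from_top_def)
  next
    case False
    have "real (degree p) * (2 * lead_coeff p * coeff_from_top p 2)
            \<le> (real (degree p) - 1) * coeff_from_top p 1 ^ 2"
      using newton_inequality[OF assms] by (simp add: mult.assoc)
    also have "\<dots> \<le> real (degree p) * coeff_from_top p 1 ^ 2"
      by (simp add: algebra_simps)
    finally show ?thesis using False by (simp add: mult_le_cancel_left_pos)
  qed
  then show ?thesis unfolding root_square_sum_def by simp
qed

lemma root_square_sum_linear_mult:
  assumes "s \<noteq> 0"
  shows "root_square_sum ([:-r, 1:] * s) = root_square_sum s + r ^ 2"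
proof -
  define p where "p = [:-r, 1:] * s"
  have lead: "lead_coeff p = lead_coeff s"
    unfolding p_def lead_coeff_mult by simp
  have top1: "coeff_from_top p 1 = coeff_from_top s 1 - r * lead_coeff s"
    using coeff_from_top_linear_mult[OF assms, of r 0] unfolding p_def
    by (simp only: One_nat_def coeff_from_top_0)
  have top2: "coeff_from_top p 2 = coeff_from_top s 2 - r * coeff_from_top s 1"
    using coeff_from_top_linear_mult[OF assms, of r 1] unfolding p_def
    by (simp only: numeral_2_eq_2 One_nat_def)
  have "root_square_sum p = root_square_sum s + r ^ 2"
    unfolding root_square_sum_def lead top1 top2
    using assms by (simp add: field_simps power2_eq_square)
  then show ?thesis unfolding p_def .
qed

text \<open>Every root has absolute value at most \<open>sqrt (root_square_sum p)\<close>, so the coefficients,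
  which are elementary symmetric functions of the roots, are controlled by the top three.\<close>
lemma real_rooted_coeff_bound:
  assumes "real_rooted p"
  shows "\<bar>coeff p i\<bar> \<le> \<bar>lead_coeff p\<bar> * (1 + sqrt (root_square_sum p)) ^ degree p"
  using assms
proof (induction "degree p" arbitrary: p i)
  case 0
  then show ?case by (cases i) (auto simp: coeff_eq_0)
next
  case (Suc d)
  obtain r s where ps: "p = [:-r, 1:] * s" and s: "real_rooted s" "s \<noteq> 0" "degree s = d"
    using real_rooted_linear_factor[OF Suc.prems Suc.hyps(2)[symmetric]] by blast
  define B where "B = \<bar>lead_coeff s\<bar> * (1 + sqrt (root_square_sum s)) ^ d"
  have IH: "\<bar>coeff s j\<bar> \<le> B" for j
    using Suc.hyps(1)[OF s(3)[symmetric] s(1)] s(3) by (simp add: B_def)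
  have rss: "root_square_sum p = root_square_sum s + r ^ 2"
    unfolding ps by (rule root_square_sum_linear_mult[OF s(2)])
  have lead: "lead_coeff p = lead_coeff s"
    unfolding ps lead_coeff_mult by simp
  have r: "\<bar>r\<bar> \<le> sqrt (root_square_sum p)"
    unfolding rss using root_square_sum_nonneg[OF s(1)] real_sqrt_le_mono[of "r ^ 2"] by simp
  have "\<bar>coeff p i\<bar> \<le> \<bar>if i = 0 then 0 else coeff s (i - 1)\<bar> + \<bar>r * coeff s i\<bar>"
    unfolding ps by (cases i) (simp_all add: mult_pCons_left coeff_pCons abs_triangle_ineq4)
  also have "\<dots> \<le> (1 + \<bar>r\<bar>) * B"
    using IH[of "i - 1"] IH[of i] mult_left_mono[OF IH[of i] abs_ge_zero[of r]] abs_ge_zero[of "coeff s i"]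
    by (cases i) (simp_all add: abs_mult algebra_simps)
  also have "\<dots> \<le> (1 + sqrt (root_square_sum p)) * (\<bar>lead_coeff s\<bar> * (1 + sqrt (root_square_sum p)) ^ d)"
    unfolding B_def using r root_square_sum_nonneg[OF s(1)]
    by (intro mult_mono mult_left_mono power_mono) (auto simp: rss)
  finally show ?case
    unfolding lead using Suc.hyps(2)[symmetric] by (simp add: algebra_simps)
qed

text \<open>For \<open>\<epsilon> \<noteq> 0\<close> the top three coefficients of \<open>\<epsilon> P + R\<close> are those of \<open>P\<close> scaled by \<open>\<epsilon>\<close>,
  so \<open>root_square_sum\<close> does not depend on \<open>\<epsilon>\<close>, and the coefficient bound would force the
  coefficient \<open>lead_coeff R\<close> of degree \<open>degree R\<close> to tend to \<open>0\<close>.\<close>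
lemma eventually_not_real_rooted_add_low:
  fixes P R :: "real poly"
  assumes "R \<noteq> 0" "degree R + 3 \<le> degree P"
  shows "eventually (\<lambda>\<epsilon>. \<not> real_rooted (smult \<epsilon> P + R)) (at 0)"
proof -
  define n d where "n = degree P" and "d = degree R"
  define K where "K = \<bar>lead_coeff P\<bar> * (1 + sqrt (root_square_sum P)) ^ n"
  have "((\<lambda>\<epsilon>. \<bar>\<epsilon> * coeff P d + lead_coeff R\<bar> - \<bar>\<epsilon>\<bar> * K) \<longlongrightarrow> \<bar>lead_coeff R\<bar>) (at 0)"
    by (auto intro!: tendsto_eq_intros)
  then have "eventually (\<lambda>\<epsilon>. 0 < \<bar>\<epsilon> * coeff P d + lead_coeff R\<bar> - \<bar>\<epsilon>\<bar> * K) (at 0)"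
    using assms(1) by (intro order_tendstoD(1)) auto
  then have "eventually (\<lambda>\<epsilon>. \<bar>\<epsilon>\<bar> * K < \<bar>\<epsilon> * coeff P d + lead_coeff R\<bar>) (at 0)"
    by (rule eventually_mono) simp
  with eventually_neq_at_within[of 0 0 UNIV] show ?thesis
  proof eventually_elim
    case (elim \<epsilon>)
    define q where "q = smult \<epsilon> P + R"
    have coeff_q: "coeff q k = \<epsilon> * coeff P k + coeff R k" for k
      by (simp add: q_def)
    have "degree q = n"
      unfolding q_def n_def using elim assms(2) by (subst degree_add_eq_left) auto
    then have top: "coeff_from_top q k = \<epsilon> * coeff_from_top P k" if "k \<le> 2" for k
      using that assms(2) elim by (auto simp: coeff_from_top_def coeff_q n_def d_def coeff_eq_0)
    moreover have "lead_coeff P \<noteq> 0"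
      using assms(2) by auto
    ultimately have "root_square_sum q = root_square_sum P"
      using top[of 0] top[of 1] top[of 2] elim
      by (simp add: root_square_sum_def field_simps power2_eq_square)
    then have "\<not> \<bar>coeff q d\<bar> \<le> \<bar>lead_coeff q\<bar> * (1 + sqrt (root_square_sum q)) ^ degree q"
      using elim top[of 0] \<open>degree q = n\<close> by (simp add: coeff_q K_def d_def abs_mult mult.assoc)
    then show ?case
      using real_rooted_coeff_bound unfolding q_def by blast
  qed
qed

section \<open>Sign alternation\<close>

definition alternates_at :: "real poly \<Rightarrow> (nat \<Rightarrow> real) \<Rightarrow> nat \<Rightarrow> bool" where
  "alternates_at p x n \<longleftrightarrow>
     (\<forall>i<n. x i < x (Suc i)) \<and> (\<forall>i\<le>n. 0 < (-1) ^ (n - i) * poly p (x i))"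

lemma alternates_at_roots_between:
  assumes "alternates_at p x n"
  obtains y where "\<And>i. i < n \<Longrightarrow> x i < y i \<and> y i < x (Suc i) \<and> poly p (y i) = 0"
proof -
  have "\<exists>y>x i. y < x (Suc i) \<and> poly p y = 0" if "i < n" for i
  proof (rule poly_IVT)
    have "(-1 :: real) ^ (n - i) = - ((-1) ^ (n - Suc i))"
      using that by (simp add: Suc_diff_Suc[symmetric])
    then have "poly p (x i) * poly p (x (Suc i))
        = - (((-1) ^ (n - i) * poly p (x i)) * ((-1) ^ (n - Suc i) * poly p (x (Suc i))))"
      by (simp add: algebra_simps flip: power_add)
    also have "\<dots> < 0"
      using assms that unfolding alternates_at_def by (simp add: mult_pos_pos)
    finally show "poly p (x i) * poly p (x (Suc i)) < 0" .
    show "x i < x (Suc i)" using assms that unfolding alternates_at_def by simp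
  qed
  then show thesis using that by metis
qed

lemma alternates_at_mono:
  assumes "alternates_at p x n" "i \<le> j" "j \<le> n"
  shows "x i \<le> x j"
proof (rule lift_Suc_mono_le_ivl[of "{..<n}" x])
  show "x k \<le> x (Suc k)" if "k \<in> {..<n}" for k
    using assms(1) that unfolding alternates_at_def by (simp add: less_imp_le)
qed (use assms(2,3) in auto)

lemma alternates_at_real_rooted:
  assumes "alternates_at p x (degree p)"
  shows "real_rooted p"
proof -
  define n where "n = degree p"
  obtain y where y: "\<And>i. i < n \<Longrightarrow> x i < y i \<and> y i < x (Suc i) \<and> poly p (y i) = 0"
    using alternates_at_roots_between assms unfolding n_def by blast
  have y_less: "y i < y j" if "i < j" "j < n" for i j
  proof -
    have "x (Suc i) \<le> x j"
      using alternates_at_mono[OF assms, of "Suc i" j] that by (simp add: n_def)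
    then show ?thesis using y[of i] y[of j] that by simp
  qed
  have inj: "inj_on (\<lambda>i. complex_of_real (y i)) {..<n}"
  proof (rule inj_onI)
    fix k l assume "k \<in> {..<n}" "l \<in> {..<n}" "complex_of_real (y k) = complex_of_real (y l)"
    then show "k = l" using y_less[of k l] y_less[of l k] by (cases k l rule: linorder_cases) auto
  qed
  let ?P = "map_poly (of_real :: real \<Rightarrow> complex) p"
  let ?Z = "{z. poly ?P z = 0}"
  show ?thesis
  proof (cases "p = 0")
    case False
    then have "?P \<noteq> 0" by (simp add: map_poly_eq_0_iff)
    have sub: "(\<lambda>i. complex_of_real (y i)) ` {..<n} \<subseteq> ?Z"
      using y by (auto simp: poly_map_poly_of_real)
    have "card ?Z \<le> n"
      using card_poly_roots_bound[OF \<open>?P \<noteq> 0\<close>] by (simp add: degree_map_poly n_def)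
    then have roots: "(\<lambda>i. complex_of_real (y i)) ` {..<n} = ?Z"
      using card_image[OF inj] card_mono[OF poly_roots_finite[OF \<open>?P \<noteq> 0\<close>] sub]
      by (intro card_subset_eq[OF poly_roots_finite[OF \<open>?P \<noteq> 0\<close>] sub]) simp
    show ?thesis unfolding real_rooted_def
    proof (intro disjI2 allI impI)
      fix z assume "poly ?P z = 0"
      then have "z \<in> (\<lambda>i. complex_of_real (y i)) ` {..<n}" unfolding roots by simp
      then show "z \<in> \<real>" by auto
    qed
  qed (simp add: real_rooted_def)
qed

lemma poly_eq_smult_prod_roots:
  fixes p :: "'a::idom poly"
  assumes "degree p = n" "inj_on y {..<n}" "\<And>i. i < n \<Longrightarrow> poly p (y i) = 0"
  shows "p = smult (lead_coeff p) (\<Prod>i<n. [:- y i, 1:])"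
  using assms
proof (induction n arbitrary: p)
  case 0
  then show ?case by (metis degree_0_id lessThan_0 prod.empty smult_one)
next
  case (Suc n)
  obtain q where pq: "p = [:- y n, 1:] * q"
    using Suc.prems(3)[of n] poly_eq_0_iff_dvd by (metis dvdE lessI)
  have "q \<noteq> 0" using pq Suc.prems(1) by auto
  then have "degree q = n" using Suc.prems(1) unfolding pq by (subst (asm) degree_mult_eq) auto
  have "poly q (y i) = 0" if "i < n" for i
  proof -
    have "y i \<noteq> y n" using Suc.prems(2) that by (auto dest: inj_onD)
    then show ?thesis using Suc.prems(3)[of i] that unfolding pq by simp
  qed
  moreover have "inj_on y {..<n}"
    using Suc.prems(2) by (rule inj_on_subset) auto
  ultimately have "q = smult (lead_coeff q) (\<Prod>i<n. [:- y i, 1:])"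
    using Suc.IH[OF \<open>degree q = n\<close>] by blast
  moreover have "lead_coeff p = lead_coeff q" unfolding pq lead_coeff_mult by simp
  ultimately show ?case by (subst pq) (metis mult_smult_right prod.lessThan_Suc mult.commute)
qed

lemma sign_prod_between:
  fixes y :: "nat \<Rightarrow> real"
  assumes "j \<le> n" "\<And>i. i < j \<Longrightarrow> y i < t" "\<And>i. j \<le> i \<Longrightarrow> i < n \<Longrightarrow> t < y i"
  shows "0 < (-1) ^ (n - j) * (\<Prod>i<n. t - y i)"
  using assms
proof (induction n)
  case (Suc n)
  show ?case
  proof (cases "j = Suc n")
    case True
    have "0 < (\<Prod>i<Suc n. t - y i)"
      using Suc.prems True by (intro prod_pos) auto
    then show ?thesis using True by simp
  next
    case False
    then have pos: "0 < (-1) ^ (n - j) * (\<Prod>i<n. t - y i)" "0 < y n - t" and "j \<le> n"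
      using Suc by auto
    then have "(-1 :: real) ^ (Suc n - j) = - ((-1) ^ (n - j))"
      by (simp add: Suc_diff_le)
    then have eq: "(-1) ^ (Suc n - j) * (\<Prod>i<Suc n. t - y i)
                     = ((-1) ^ (n - j) * (\<Prod>i<n. t - y i)) * (y n - t)"
      unfolding prod.lessThan_Suc by (simp add: algebra_simps)
    show ?thesis unfolding eq using pos by (rule mult_pos_pos)
  qed
qed simp

lemma alternates_at_interlacing_roots:
  fixes p :: "real poly"
  assumes "degree p = n" "lead_coeff p > 0"
    and "\<And>i. Suc i < n \<Longrightarrow> y i < y (Suc i)" "\<And>i. i < n \<Longrightarrow> poly p (y i) = 0"
    and "\<And>i. 0 < i \<Longrightarrow> i \<le> n \<Longrightarrow> y (i - 1) < x i" "\<And>i. i < n \<Longrightarrow> x i < y i"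
  shows "alternates_at p x n"
proof -
  have y_less: "y k < y l" if "k < l" "l < n" for k l
  proof (rule lift_Suc_mono_less_ivl[of "{m. Suc m < n}" y])
    show "{k..<l} \<subseteq> {m. Suc m < n}" using that by auto
  qed (use that assms(3) in auto)
  then have y_le: "y k \<le> y l" if "k \<le> l" "l < n" for k l
    using that by (cases "k = l") (auto intro: less_imp_le)
  have "inj_on y {..<n}"
  proof (rule inj_onI)
    fix k l assume "k \<in> {..<n}" "l \<in> {..<n}" "y k = y l"
    then show "k = l" using y_less[of k l] y_less[of l k] by (cases k l rule: linorder_cases) auto
  qed
  then have factor: "p = smult (lead_coeff p) (\<Prod>i<n. [:- y i, 1:])"
    using assms(4) by (rule poly_eq_smult_prod_roots[OF assms(1)])
  have "0 < (-1) ^ (n - i) * poly p (x i)" if "i \<le> n" for i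
  proof -
    have "0 < (-1) ^ (n - i) * (\<Prod>k<n. x i - y k)"
    proof (rule sign_prod_between)
      show "y k < x i" if "k < i" for k
      proof -
        have "k \<le> i - 1" "i - 1 < n" using that \<open>i \<le> n\<close> by auto
        then show ?thesis using y_le[of k "i - 1"] assms(5)[of i] that \<open>i \<le> n\<close> by simp
      qed
      show "x i < y k" if "i \<le> k" "k < n" for k
        using y_le[of i k] assms(6)[of i] that by simp
    qed (use that in simp)
    then show ?thesis
      using assms(2) by (subst factor) (simp add: poly_prod mult.left_commute)
  qed
  moreover have "x i < x (Suc i)" if "i < n" for i
    using assms(5)[of "Suc i"] assms(6)[of i] that by simp
  ultimately show ?thesis unfolding alternates_at_def by simp
qed

lemma eventually_alternates_at_add:
  assumes "alternates_at p x n"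
  shows "eventually (\<lambda>t. alternates_at (p + smult t q) x n) (at 0)"
proof -
  have "eventually (\<lambda>t. 0 < (-1) ^ (n - i) * poly (p + smult t q) (x i)) (at 0)" if "i \<le> n" for i
  proof (rule order_tendstoD(1))
    show "((\<lambda>t. (-1) ^ (n - i) * poly (p + smult t q) (x i)) \<longlongrightarrow> (-1) ^ (n - i) * poly p (x i)) (at 0)"
      by simp (auto intro!: tendsto_eq_intros)
    show "0 < (-1) ^ (n - i) * poly p (x i)"
      using assms that unfolding alternates_at_def by simp
  qed
  then have "eventually (\<lambda>t. \<forall>i\<in>{..n}. 0 < (-1) ^ (n - i) * poly (p + smult t q) (x i)) (at 0)"
    by (intro eventually_ball_finite) auto
  then show ?thesis
    using assms unfolding alternates_at_def by (auto elim: eventually_mono)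
qed

lemma alternates_at_extend_left:
  assumes "alternates_at p x n" "degree p = Suc n" "lead_coeff p > 0"
  obtains x' where "alternates_at p x' (Suc n)"
proof -
  \<comment> \<open>Far to the left, \<open>p\<close> has the sign of \<open>(-1)^(degree p)\<close>: look at \<open>p(-x)\<close> at \<open>+\<infinity>\<close>.\<close>
  define q where "q = smult ((-1) ^ Suc n) (p \<circ>\<^sub>p [:0, -1:])"
  have "lead_coeff q = lead_coeff p"
    unfolding q_def lead_coeff_smult using assms(2)
    by (subst lead_coeff_comp) (auto simp flip: power_mult_distrib)
  then obtain N where N: "\<And>t. t \<ge> N \<Longrightarrow> lead_coeff p \<le> poly q t"
    using poly_pinfty_gt_lc[of q] assms(3) by auto
  define w where "w = - max N (\<bar>x 0\<bar> + 1)"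
  have w: "w < x 0" "0 < (-1) ^ Suc n * poly p w"
    using N[of "- w"] assms(3) by (auto simp: w_def q_def poly_pcompose)
  define x' where "x' i = (if i = 0 then w else x (i - 1))" for i
  have "alternates_at p x' (Suc n)"
    using assms(1) w unfolding alternates_at_def x'_def
    by (auto simp: Suc_diff_le nat.split_sels(1) gr0_conv_Suc)
  then show thesis by (rule that)
qed

section \<open>Legendre polynomials\<close>

lemma coeff_legendre_Suc_Suc:
  "coeff (legendre (Suc (Suc n))) i =
     (real (2 * n + 3) * (if i = 0 then 0 else coeff (legendre (Suc n)) (i - 1))
       - real (n + 1) * coeff (legendre n) i) / real (n + 2)"
  by (cases i) (simp_all add: mult_pCons_left coeff_pCons field_simps)

lemma poly_legendre_Suc_Suc:
  "poly (legendre (Suc (Suc n))) x =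
     (real (2 * n + 3) * x * poly (legendre (Suc n)) x - real (n + 1) * poly (legendre n) x) / real (n + 2)"
  by (simp add: field_simps)

declare legendre.simps(3) [simp del]

lemma legendre_degree_top_coeffs:
  "degree (legendre n) = n \<and> 0 < lead_coeff (legendre n)
     \<and> (1 \<le> n \<longrightarrow> coeff (legendre n) (n - 1) = 0) \<and> (2 \<le> n \<longrightarrow> coeff (legendre n) (n - 2) < 0)"
proof (induction n rule: legendre.induct)
  case (3 n)
  have deg: "degree (legendre (Suc n)) = Suc n" "degree (legendre n) = n"
    and lead: "0 < coeff (legendre (Suc n)) (Suc n)" "0 < coeff (legendre n) n"
    and sub: "coeff (legendre (Suc n)) n = 0"
    and subsub: "(if n = 0 then 0 else coeff (legendre (Suc n)) (n - 1)) \<le> 0"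
    using 3 by (auto simp: less_imp_le)
  have high: "coeff (legendre (Suc (Suc n))) i = 0" if "Suc (Suc n) < i" for i
    using deg that by (simp add: coeff_legendre_Suc_Suc coeff_eq_0)
  have top: "0 < coeff (legendre (Suc (Suc n))) (Suc (Suc n))"
    using lead deg by (simp add: coeff_legendre_Suc_Suc coeff_eq_0)
  have "degree (legendre (Suc (Suc n))) \<le> Suc (Suc n)"
    using high by (intro degree_le) auto
  moreover have "Suc (Suc n) \<le> degree (legendre (Suc (Suc n)))"
    using top by (intro le_degree) simp
  ultimately have "degree (legendre (Suc (Suc n))) = Suc (Suc n)"
    by (rule order.antisym)
  moreover have "coeff (legendre (Suc (Suc n))) (Suc n) = 0"
    using sub deg by (simp add: coeff_legendre_Suc_Suc coeff_eq_0)
  moreover have "coeff (legendre (Suc (Suc n))) n < 0"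
  proof -
    have "real (2 * n + 3) * (if n = 0 then 0 else coeff (legendre (Suc n)) (n - 1)) \<le> 0"
      using subsub by (intro mult_nonneg_nonpos) auto
    moreover have "0 < real (n + 1) * coeff (legendre n) n"
      using lead(2) by simp
    ultimately have "real (2 * n + 3) * (if n = 0 then 0 else coeff (legendre (Suc n)) (n - 1))
            - real (n + 1) * coeff (legendre n) n < 0"
      by linarith
    then show ?thesis by (simp add: coeff_legendre_Suc_Suc divide_neg_pos)
  qed
  ultimately show ?case using top by simp
qed simp_all

lemma degree_legendre [simp]: "degree (legendre n) = n"
  using legendre_degree_top_coeffs by blast

lemma lead_coeff_legendre_pos: "0 < lead_coeff (legendre n)"
  using legendre_degree_top_coeffs by blast

lemma legendre_nonzero [simp]: "legendre n \<noteq> 0"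
  using lead_coeff_legendre_pos[of n] by auto

lemma coeff_legendre_Suc: "coeff (legendre (Suc n)) n = 0"
  using legendre_degree_top_coeffs[of "Suc n"] by simp

lemma coeff_legendre_Suc_Suc_neg: "coeff (legendre (Suc (Suc n))) n < 0"
  using legendre_degree_top_coeffs[of "Suc (Suc n)"] by simp

lemma poly_legendre_one_minus_one: "poly (legendre n) 1 = 1 \<and> poly (legendre n) (-1) = (-1) ^ n"
  by (induction n rule: legendre.induct) (simp_all add: poly_legendre_Suc_Suc field_simps)

lemma legendre_span:
  assumes "degree p \<le> n"
  obtains a where "p = (\<Sum>k\<le>n. smult (a k) (legendre k))"
  using assms
proof (induction n arbitrary: p thesis)
  case 0
  then have "p = smult (coeff p 0) (legendre 0)"
    by (simp add: degree_0_id)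
  then show ?case using 0 by auto
next
  case (Suc n)
  define c where "c = coeff p (Suc n) / lead_coeff (legendre (Suc n))"
  have "degree (p - smult c (legendre (Suc n))) \<le> n"
  proof (rule degree_le, intro allI impI)
    fix i assume "n < i"
    then consider "i = Suc n" | "Suc n < i" by linarith
    then show "coeff (p - smult c (legendre (Suc n))) i = 0"
    proof cases
      case 1
      then show ?thesis using lead_coeff_legendre_pos[of "Suc n"] by (simp add: c_def)
    next
      case 2
      then show ?thesis using Suc.prems(2) by (simp add: coeff_eq_0)
    qed
  qed
  then obtain a where a: "p - smult c (legendre (Suc n)) = (\<Sum>k\<le>n. smult (a k) (legendre k))"
    using Suc.IH by blast
  have "p = (\<Sum>k\<le>Suc n. smult ((a(Suc n := c)) k) (legendre k))"
    using a by (simp add: algebra_simps)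
  then show ?case by (rule Suc.prems(1))
qed

lemma coeff_legendre_sum_top:
  fixes b :: "nat \<Rightarrow> real" and m :: nat
  defines "q \<equiv> (\<Sum>k\<le>Suc (Suc m). smult (b k) (legendre k))"
  shows "coeff q (Suc (Suc m)) = b (Suc (Suc m)) * lead_coeff (legendre (Suc (Suc m)))"
    and "coeff q (Suc m) = b (Suc m) * lead_coeff (legendre (Suc m))"
    and "coeff q m = b m * lead_coeff (legendre m) + b (Suc (Suc m)) * coeff (legendre (Suc (Suc m))) m"
    and "degree q \<le> Suc (Suc m)"
proof -
  have "(\<Sum>k<m. b k * coeff (legendre k) i) = 0" if "m \<le> i" for i
    using that by (intro sum.neutral) (auto simp: coeff_eq_0)
  then have coeff_q: "coeff q i = b (Suc (Suc m)) * coeff (legendre (Suc (Suc m))) i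
      + b (Suc m) * coeff (legendre (Suc m)) i + b m * coeff (legendre m) i" if "m \<le> i" for i
    using that by (simp add: q_def coeff_sum lessThan_Suc_atMost[symmetric])
  show "coeff q (Suc (Suc m)) = b (Suc (Suc m)) * lead_coeff (legendre (Suc (Suc m)))"
    by (simp add: coeff_q coeff_eq_0)
  show "coeff q (Suc m) = b (Suc m) * lead_coeff (legendre (Suc m))"
    by (simp add: coeff_q coeff_eq_0 coeff_legendre_Suc)
  show "coeff q m = b m * lead_coeff (legendre m) + b (Suc (Suc m)) * coeff (legendre (Suc (Suc m))) m"
    by (simp add: coeff_q coeff_legendre_Suc)
  show "degree q \<le> Suc (Suc m)"
    unfolding q_def by (intro degree_sum_le) (auto intro: order.trans[OF degree_smult_le])
qed

lemma legendre_Suc_Suc_alternates_at_zeros: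
  assumes "alternates_at (legendre n) y n"
    and "\<And>i. i \<le> n \<Longrightarrow> -1 < y i \<and> y i < 1 \<and> poly (legendre (Suc n)) (y i) = 0"
  shows "alternates_at (legendre (Suc (Suc n)))
           (\<lambda>k. if k = 0 then -1 else if k \<le> Suc n then y (k - 1) else 1) (Suc (Suc n))"
    (is "alternates_at _ ?u _")
proof -
  have "?u k < ?u (Suc k)" if "k < Suc (Suc n)" for k
    using assms that unfolding alternates_at_def
    by (cases k) (auto simp: not_less_eq_eq)
  moreover have "0 < (-1) ^ (Suc (Suc n) - k) * poly (legendre (Suc (Suc n))) (?u k)"
    if "k \<le> Suc (Suc n)" for k
  proof -
    consider "k = 0" | "k = Suc (Suc n)" | i where "k = Suc i" "i \<le> n"
      using \<open>k \<le> Suc (Suc n)\<close> by (cases k) (auto simp: le_Suc_eq)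
    then show ?thesis
    proof cases
      case 1
      then show ?thesis
        using poly_legendre_one_minus_one[of "Suc (Suc n)"] by (simp flip: power_mult_distrib)
    next
      case 2
      then show ?thesis using poly_legendre_one_minus_one[of "Suc (Suc n)"] by simp
    next
      case 3
      \<comment> \<open>At a zero of the middle polynomial, the three-term recurrence relates the outer two.\<close>
      have "poly (legendre (Suc (Suc n))) (y i) = - (real (n + 1) / real (n + 2)) * poly (legendre n) (y i)"
        using assms(2)[OF \<open>i \<le> n\<close>] by (simp add: poly_legendre_Suc_Suc field_simps)
      moreover have "(-1 :: real) ^ (Suc (Suc n) - k) = - ((-1) ^ (n - i))"
        using 3 by (simp add: Suc_diff_le)
      ultimately have "(-1) ^ (Suc (Suc n) - k) * poly (legendre (Suc (Suc n))) (?u k)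
          = real (n + 1) / real (n + 2) * ((-1) ^ (n - i) * poly (legendre n) (y i))"
        using 3 by simp
      also have "\<dots> > 0"
        using assms(1) \<open>i \<le> n\<close> unfolding alternates_at_def by simp
      finally show ?thesis .
    qed
  qed
  ultimately show ?thesis unfolding alternates_at_def by blast
qed

lemma legendre_zeros_interlace:
  "\<exists>y. alternates_at (legendre n) y n
      \<and> (\<forall>i\<le>n. -1 < y i \<and> y i < 1 \<and> poly (legendre (Suc n)) (y i) = 0)"
proof (induction n)
  case 0
  show ?case by (intro exI[of _ "\<lambda>_. 0"]) (simp add: alternates_at_def)
next
  case (Suc n)
  then obtain y where y: "alternates_at (legendre n) y n"
    "\<And>i. i \<le> n \<Longrightarrow> -1 < y i \<and> y i < 1 \<and> poly (legendre (Suc n)) (y i) = 0"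
    by blast
  define u where "u k = (if k = 0 then -1 else if k \<le> Suc n then y (k - 1) else 1)" for k
  have u: "alternates_at (legendre (Suc (Suc n))) u (Suc (Suc n))"
    unfolding u_def by (rule legendre_Suc_Suc_alternates_at_zeros[OF y])
  obtain w where w: "\<And>i. i < Suc (Suc n) \<Longrightarrow>
      u i < w i \<and> w i < u (Suc i) \<and> poly (legendre (Suc (Suc n))) (w i) = 0"
    using alternates_at_roots_between[OF u] by blast
  have "alternates_at (legendre (Suc n)) w (Suc n)"
  proof (rule alternates_at_interlacing_roots[where y = y])
    show "y i < y (Suc i)" if "Suc i < Suc n" for i
      using y(1) that unfolding alternates_at_def by simp
    show "y (i - 1) < w i" if "0 < i" "i \<le> Suc n" for i
      using w[of i] that by (simp add: u_def)
    show "w i < y i" if "i < Suc n" for i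
      using w[of i] that by (simp add: u_def)
  qed (use y(2) lead_coeff_legendre_pos in auto)
  moreover have "-1 < w i \<and> w i < 1" if "i \<le> Suc n" for i
    using w[of i] that alternates_at_mono[OF u, of 0 i] alternates_at_mono[OF u, of "Suc i" "Suc (Suc n)"]
    by (simp add: u_def)
  ultimately show ?case using w by (intro exI[of _ w]) auto
qed

lemma legendre_alternates_at: "\<exists>x. alternates_at (legendre n) x n"
  using legendre_zeros_interlace by blast

lemma legendre_two_term_not_real_rooted:
  assumes "a + 2 \<le> c"
  obtains \<alpha> \<beta> where "\<not> real_rooted (smult \<alpha> (legendre c) + smult \<beta> (legendre a))"
proof (cases "a + 2 = c")
  case True
  define \<beta> where "\<beta> = (1 - coeff (legendre c) a) / lead_coeff (legendre a)"
  define q where "q = smult 1 (legendre c) + smult \<beta> (legendre a)"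
  have "degree q = c"
    unfolding q_def using assms by (subst degree_add_eq_left) (auto intro: le_less_trans[OF degree_smult_le])
  moreover have "coeff q (Suc a) = 0" "coeff q a = 1"
    using True lead_coeff_legendre_pos[of a]
    by (auto simp: q_def \<beta>_def coeff_eq_0 coeff_legendre_Suc)
  ultimately have "coeff_from_top q 1 = 0" "coeff_from_top q 2 = 1" "lead_coeff q = lead_coeff (legendre c)"
    using True by (auto simp: coeff_from_top_def q_def coeff_eq_0)
  then have "\<not> real_rooted q"
    using real_rooted_top_coeffs[of q] lead_coeff_legendre_pos[of c] by auto
  then show thesis unfolding q_def by (rule that)
next
  case False
  then have "eventually (\<lambda>\<epsilon>. \<not> real_rooted (smult \<epsilon> (legendre c) + smult 1 (legendre a))) (at 0)"
    using assms eventually_not_real_rooted_add_low[of "legendre a" "legendre c"] by simp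
  then show thesis
    using that eventually_happens'[OF at_neq_bot] by blast
qed

section \<open>Legendre multiplier sequences\<close>

lemma legendre_multiplier_sequence_sum:
  assumes "legendre_multiplier_sequence \<gamma>" "finite K"
    and "real_rooted (\<Sum>k\<in>K. smult (a k) (legendre k))"
  shows "real_rooted (\<Sum>k\<in>K. smult (\<gamma> k * a k) (legendre k))"
proof -
  obtain n where "K \<subseteq> {..n}"
    using assms(2) finite_nat_iff_bounded_le by auto
  define a' where "a' k = (if k \<in> K then a k else 0)" for k
  have sum_eq: "(\<Sum>k\<le>n. smult (f k * a' k) (legendre k)) = (\<Sum>k\<in>K. smult (f k * a k) (legendre k))"
    for f :: "nat \<Rightarrow> real"
    using \<open>K \<subseteq> {..n}\<close> by (intro sum.mono_neutral_cong_right) (auto simp: a'_def)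
  have "real_rooted (\<Sum>k\<le>n. smult (a' k) (legendre k))"
    using assms(3) sum_eq[of "\<lambda>_. 1"] by simp
  then have "real_rooted (\<Sum>k\<le>n. smult (\<gamma> k * a' k) (legendre k))"
    using assms(1) unfolding legendre_multiplier_sequence_def by blast
  then show ?thesis using sum_eq[of \<gamma>] by simp
qed

lemma real_choose_Suc_Suc_self: "real (Suc (Suc m) choose m) = real (Suc (Suc m)) * real (Suc m) / 2"
  by (induction m) (simp_all add: field_simps)

lemma legendre_expansion_linear_power:
  fixes r :: real
  assumes "[:-r, 1:] ^ Suc (Suc m) = (\<Sum>k\<le>Suc (Suc m). smult (a k) (legendre k))"
  shows "a (Suc (Suc m)) * lead_coeff (legendre (Suc (Suc m))) = 1"
    and "a (Suc m) * lead_coeff (legendre (Suc m)) = - real (Suc (Suc m)) * r"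
    and "a m * lead_coeff (legendre m) + a (Suc (Suc m)) * coeff (legendre (Suc (Suc m))) m
           = real (Suc (Suc m)) * real (Suc m) / 2 * r ^ 2"
proof -
  have coeff_power: "coeff ([:-r, 1:] ^ Suc (Suc m)) i = real (Suc (Suc m) choose i) * (-r) ^ (Suc (Suc m) - i)"
    if "i \<le> Suc (Suc m)" for i
    using coeff_linear_poly_power[OF that, of "-r" 1] by (simp del: power_Suc)
  note top = coeff_legendre_sum_top[of a m, folded assms]
  show "a (Suc (Suc m)) * lead_coeff (legendre (Suc (Suc m))) = 1"
    using top(1) coeff_power[of "Suc (Suc m)"] by (simp del: power_Suc)
  show "a (Suc m) * lead_coeff (legendre (Suc m)) = - real (Suc (Suc m)) * r"
    using top(2) coeff_power[of "Suc m"] by (simp del: power_Suc add: algebra_simps)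
  show "a m * lead_coeff (legendre m) + a (Suc (Suc m)) * coeff (legendre (Suc (Suc m))) m
          = real (Suc (Suc m)) * real (Suc m) / 2 * r ^ 2"
    using top(3) coeff_power[of m] by (simp del: power_Suc add: real_choose_Suc_Suc_self numeral_2_eq_2)
qed

lemma nonneg_quadratic_coeffs:
  fixes A B :: real
  assumes "\<And>r. 0 \<le> A * r ^ 2 + B"
  shows "0 \<le> A" and "0 \<le> B"
proof -
  show "0 \<le> B" using assms[of 0] by simp
  show "0 \<le> A"
  proof (rule ccontr)
    assume "\<not> 0 \<le> A"
    define r where "r = sqrt ((\<bar>B\<bar> + 1) / - A)"
    have "r ^ 2 = (\<bar>B\<bar> + 1) / - A"
      unfolding r_def using \<open>\<not> 0 \<le> A\<close> by (intro real_sqrt_pow2) (simp add: divide_nonneg_neg)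
    then have "A * r ^ 2 = - (\<bar>B\<bar> + 1)"
      using \<open>\<not> 0 \<le> A\<close> by simp
    then show False using assms[of r] by linarith
  qed
qed

lemma legendre_multiplier_turan_quadratic:
  assumes "legendre_multiplier_sequence \<gamma>" "0 < \<gamma> (Suc (Suc m))"
  defines "\<sigma> \<equiv> - coeff (legendre (Suc (Suc m))) m / lead_coeff (legendre (Suc (Suc m)))"
  shows "0 \<le> real (Suc m) * real (Suc (Suc m)) ^ 2 * (\<gamma> (Suc m) ^ 2 - \<gamma> (Suc (Suc m)) * \<gamma> m) * r ^ 2
           + 2 * real (Suc (Suc m)) * \<sigma> * \<gamma> (Suc (Suc m)) * (\<gamma> (Suc (Suc m)) - \<gamma> m)"
proof -
  let ?N = "Suc (Suc m)"
  obtain a where a: "[:-r, 1:] ^ ?N = (\<Sum>k\<le>?N. smult (a k) (legendre k))"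
    using legendre_span[of "[:-r, 1:] ^ ?N" ?N] by (auto simp del: power_Suc simp: degree_linear_power)
  note lin = legendre_expansion_linear_power[OF a]
  define q where "q = (\<Sum>k\<le>?N. smult (\<gamma> k * a k) (legendre k))"
  have "real_rooted q"
    using assms(1) real_rooted_linear_power[of r ?N] unfolding a q_def legendre_multiplier_sequence_def
    by blast
  note top = coeff_legendre_sum_top[of "\<lambda>k. \<gamma> k * a k" m, folded q_def]
  have lead: "coeff q ?N = \<gamma> ?N"
    using top(1) lin(1) by (simp add: mult.assoc)
  have deg: "degree q = ?N"
    using top(4) lead assms(2) by (intro order.antisym le_degree) auto
  have aN: "a ?N * coeff (legendre ?N) m = - \<sigma>"
    using lin(1) lead_coeff_legendre_pos[of ?N] by (simp add: \<sigma>_def field_simps)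
  then have "a m * lead_coeff (legendre m) = real ?N * real (Suc m) / 2 * r ^ 2 + \<sigma>"
    using lin(3) by linarith
  moreover have "coeff q m = \<gamma> m * (a m * lead_coeff (legendre m)) + \<gamma> ?N * (a ?N * coeff (legendre ?N) m)"
    using top(3) by (simp add: algebra_simps)
  ultimately have t2: "coeff_from_top q 2 = \<gamma> m * (real ?N * real (Suc m) / 2 * r ^ 2 + \<sigma>) - \<gamma> ?N * \<sigma>"
    using deg aN by (simp add: coeff_from_top_def)
  have "coeff q (Suc m) = \<gamma> (Suc m) * (a (Suc m) * lead_coeff (legendre (Suc m)))"
    using top(2) by (simp add: algebra_simps)
  then have t1: "coeff_from_top q 1 = - real ?N * r * \<gamma> (Suc m)"
    using lin(2) deg by (simp add: coeff_from_top_def)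
  have "2 * real ?N * \<gamma> ?N * coeff_from_top q 2 \<le> real (Suc m) * coeff_from_top q 1 ^ 2"
    using newton_inequality[OF \<open>real_rooted q\<close>] deg lead by simp
  moreover have "real (Suc m) * coeff_from_top q 1 ^ 2 - 2 * real ?N * \<gamma> ?N * coeff_from_top q 2
      = real (Suc m) * real ?N ^ 2 * (\<gamma> (Suc m) ^ 2 - \<gamma> ?N * \<gamma> m) * r ^ 2
          + 2 * real ?N * \<sigma> * \<gamma> ?N * (\<gamma> ?N - \<gamma> m)"
    unfolding t1 t2 by (simp add: field_simps power2_eq_square)
  ultimately show ?thesis by linarith
qed

lemma legendre_multiplier_turan:
  assumes "legendre_multiplier_sequence \<gamma>" "0 < \<gamma> (Suc (Suc m))"
  shows "\<gamma> m \<le> \<gamma> (Suc (Suc m))" and "\<gamma> (Suc (Suc m)) * \<gamma> m \<le> \<gamma> (Suc m) ^ 2"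
proof -
  define \<sigma> where "\<sigma> = - coeff (legendre (Suc (Suc m))) m / lead_coeff (legendre (Suc (Suc m)))"
  have "0 < \<sigma>"
    using coeff_legendre_Suc_Suc_neg[of m] lead_coeff_legendre_pos[of "Suc (Suc m)"]
    by (simp add: \<sigma>_def divide_neg_pos)
  note quadratic = legendre_multiplier_turan_quadratic[OF assms, folded \<sigma>_def]
  have cancel: "0 \<le> x" if "0 \<le> c * x" "0 < c" for c x :: real
    using that by (simp add: zero_le_mult_iff)
  have "0 \<le> 2 * real (Suc (Suc m)) * \<sigma> * \<gamma> (Suc (Suc m)) * (\<gamma> (Suc (Suc m)) - \<gamma> m)"
    by (rule nonneg_quadratic_coeffs(2)[OF quadratic])
  from cancel[OF this] show "\<gamma> m \<le> \<gamma> (Suc (Suc m))"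
    using \<open>0 < \<sigma>\<close> assms(2) by simp
  have "0 \<le> real (Suc m) * real (Suc (Suc m)) ^ 2 * (\<gamma> (Suc m) ^ 2 - \<gamma> (Suc (Suc m)) * \<gamma> m)"
    by (rule nonneg_quadratic_coeffs(1)[OF quadratic])
  from cancel[OF this] show "\<gamma> (Suc (Suc m)) * \<gamma> m \<le> \<gamma> (Suc m) ^ 2"
    by simp
qed

text \<open>If \<open>\<gamma> N = 0\<close>, a small multiple of any polynomial of lower degree can be added to
  \<open>legendre N\<close> without destroying real-rootedness, while the multiplier kills \<open>legendre N\<close>.\<close>
lemma legendre_multiplier_vanishing:
  assumes "legendre_multiplier_sequence \<gamma>" "\<gamma> N = 0"
  shows "real_rooted (\<Sum>k<N. smult (\<gamma> k * a k) (legendre k))"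
proof (cases "N = 0")
  case False
  define f where "f = (\<Sum>k<N. smult (a k) (legendre k))"
  obtain x where "alternates_at (legendre N) x N"
    using legendre_alternates_at by blast
  then have "eventually (\<lambda>\<tau>. \<tau> \<noteq> 0 \<and> alternates_at (legendre N + smult \<tau> f) x N) (at 0)"
    using eventually_neq_at_within[of 0 0 UNIV] eventually_alternates_at_add by (auto elim: eventually_conj)
  then obtain \<tau> where \<tau>: "\<tau> \<noteq> 0" "alternates_at (legendre N + smult \<tau> f) x N"
    using eventually_happens'[OF at_neq_bot] by blast
  have "degree f \<le> N - 1"
    unfolding f_def by (intro degree_sum_le) (auto intro: order.trans[OF degree_smult_le])
  then have "degree (smult \<tau> f) < N"
    using False by (intro le_less_trans[OF degree_smult_le]) linarith
  then have "degree (legendre N + smult \<tau> f) = N"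
    by (subst degree_add_eq_left) auto
  then have rr: "real_rooted (legendre N + smult \<tau> f)"
    using \<tau>(2) by (intro alternates_at_real_rooted) simp
  define b where "b k = (if k = N then 1 else \<tau> * a k)" for k
  have expand: "(\<Sum>k\<le>N. smult (g k * b k) (legendre k))
      = smult (g N) (legendre N) + smult \<tau> (\<Sum>k<N. smult (g k * a k) (legendre k))" for g
    by (simp add: b_def lessThan_Suc_atMost[symmetric] smult_sum_right algebra_simps)
  have "real_rooted (\<Sum>k\<le>N. smult (b k) (legendre k))"
    using rr expand[of "\<lambda>_. 1"] by (simp add: f_def)
  then have "real_rooted (\<Sum>k\<le>N. smult (\<gamma> k * b k) (legendre k))"
    using assms(1) unfolding legendre_multiplier_sequence_def by blast
  then have "real_rooted (smult \<tau> (\<Sum>k<N. smult (\<gamma> k * a k) (legendre k)))"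
    using expand[of \<gamma>] assms(2) by simp
  then show ?thesis
    using \<tau>(1) real_rooted_smult_iff by blast
qed (simp add: real_rooted_def)

lemma legendre_multiplier_zero_imp_sparse_below:
  assumes "legendre_multiplier_sequence \<gamma>" "\<gamma> N = 0" "a + 2 \<le> c" "c < N"
  shows "\<gamma> a = 0 \<or> \<gamma> c = 0"
proof (rule ccontr)
  assume "\<not> (\<gamma> a = 0 \<or> \<gamma> c = 0)"
  then have "\<gamma> a \<noteq> 0" "\<gamma> c \<noteq> 0" by auto
  obtain \<alpha> \<beta> where not_rr: "\<not> real_rooted (smult \<alpha> (legendre c) + smult \<beta> (legendre a))"
    using legendre_two_term_not_real_rooted[OF assms(3)] .
  define e where "e k = (if k = c then \<alpha> / \<gamma> c else 0) + (if k = a then \<beta> / \<gamma> a else 0)" for k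
  have "(\<Sum>k<N. smult (\<gamma> k * e k) (legendre k))
      = (\<Sum>k<N. (if k = c then smult \<alpha> (legendre c) else 0) + (if k = a then smult \<beta> (legendre a) else 0))"
    using \<open>\<gamma> a \<noteq> 0\<close> \<open>\<gamma> c \<noteq> 0\<close> assms(3) by (intro sum.cong) (auto simp: e_def)
  also have "\<dots> = smult \<alpha> (legendre c) + smult \<beta> (legendre a)"
    using assms(3,4) by (simp add: sum.distrib)
  finally show False
    using legendre_multiplier_vanishing[OF assms(1,2), of e] not_rr by simp
qed

text \<open>\<open>P\<^sub>m + t P\<^sub>j\<close> alternates at \<open>m + 1\<close> points, and adding a small \<open>\<epsilon> P\<^sub>m\<^sub>+\<^sub>1\<close> supplies a
  further sign change far to the left; if \<open>\<gamma>\<^sub>m = 0\<close>, the multiplier maps this real-rooted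
  polynomial to \<open>\<epsilon> \<gamma>\<^sub>m\<^sub>+\<^sub>1 P\<^sub>m\<^sub>+\<^sub>1 + t \<gamma>\<^sub>j P\<^sub>j\<close>.\<close>
lemma legendre_multiplier_nonzero_before:
  assumes "legendre_multiplier_sequence \<gamma>" "\<gamma> j \<noteq> 0" "j + 2 \<le> m" "\<gamma> (Suc m) \<noteq> 0"
  shows "\<gamma> m \<noteq> 0"
proof
  assume "\<gamma> m = 0"
  obtain x where "alternates_at (legendre m) x m"
    using legendre_alternates_at by blast
  then have "eventually (\<lambda>t. alternates_at (legendre m + smult t (legendre j)) x m) (at_right 0)"
    using eventually_alternates_at_add eventually_at_split by blast
  then have "eventually (\<lambda>t. 0 < t \<and> alternates_at (legendre m + smult t (legendre j)) x m) (at_right 0)"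
    by (rule eventually_conj[OF eventually_at_right_less])
  then obtain t where t: "0 < t" "alternates_at (legendre m + smult t (legendre j)) x m"
    using eventually_happens'[OF trivial_limit_at_right_real] by blast
  define g where "g = legendre m + smult t (legendre j)"
  have "eventually (\<lambda>\<epsilon>. \<not> real_rooted (smult \<epsilon> (smult (\<gamma> (Suc m)) (legendre (Suc m)))
      + smult (\<gamma> j * t) (legendre j))) (at 0)"
    using assms(2-4) t(1) by (intro eventually_not_real_rooted_add_low) auto
  moreover have "eventually (\<lambda>\<epsilon>. alternates_at (g + smult \<epsilon> (legendre (Suc m))) x m) (at 0)"
    using t(2) unfolding g_def by (rule eventually_alternates_at_add)
  ultimately have "eventually (\<lambda>\<epsilon>. alternates_at (g + smult \<epsilon> (legendre (Suc m))) x m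
      \<and> \<not> real_rooted (smult (\<epsilon> * \<gamma> (Suc m)) (legendre (Suc m)) + smult (\<gamma> j * t) (legendre j))) (at_right 0)"
    unfolding eventually_at_split smult_smult eventually_conj_iff by blast
  then have "eventually (\<lambda>\<epsilon>. 0 < \<epsilon> \<and> alternates_at (g + smult \<epsilon> (legendre (Suc m))) x m
      \<and> \<not> real_rooted (smult (\<epsilon> * \<gamma> (Suc m)) (legendre (Suc m)) + smult (\<gamma> j * t) (legendre j))) (at_right 0)"
    by (rule eventually_conj[OF eventually_at_right_less])
  then obtain \<epsilon> where \<epsilon>: "0 < \<epsilon>" "alternates_at (g + smult \<epsilon> (legendre (Suc m))) x m"
    and not_rr: "\<not> real_rooted (smult (\<epsilon> * \<gamma> (Suc m)) (legendre (Suc m)) + smult (\<gamma> j * t) (legendre j))"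
    using eventually_happens'[OF trivial_limit_at_right_real] by blast
  define p where "p = g + smult \<epsilon> (legendre (Suc m))"
  have "degree g \<le> m"
    unfolding g_def using assms(3) by (intro degree_add_le) (auto intro: order.trans[OF degree_smult_le])
  then have "degree p = Suc m" "lead_coeff p = \<epsilon> * lead_coeff (legendre (Suc m))"
    unfolding p_def using \<epsilon>(1) by (simp_all add: degree_add_eq_right coeff_eq_0)
  moreover have "0 < \<epsilon> * lead_coeff (legendre (Suc m))"
    using \<epsilon>(1) lead_coeff_legendre_pos by simp
  ultimately obtain x' where "alternates_at p x' (Suc m)"
    using alternates_at_extend_left[of p x m] \<epsilon>(2) unfolding p_def by auto
  then have "real_rooted p"
    using \<open>degree p = Suc m\<close> by (intro alternates_at_real_rooted) simp
  define b where "b k = (if k = Suc m then \<epsilon> else if k = m then 1 else t)" for k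
  have sum: "(\<Sum>k\<in>{Suc m, m, j}. smult (f k * b k) (legendre k))
      = smult (\<epsilon> * f (Suc m)) (legendre (Suc m)) + smult (f m) (legendre m) + smult (f j * t) (legendre j)"
    for f :: "nat \<Rightarrow> real"
    using assms(3) by (simp add: b_def mult.commute)
  have "real_rooted (\<Sum>k\<in>{Suc m, m, j}. smult (1 * b k) (legendre k))"
    using \<open>real_rooted p\<close> unfolding sum p_def g_def by (simp add: add_ac)
  then have "real_rooted (\<Sum>k\<in>{Suc m, m, j}. smult (\<gamma> k * b k) (legendre k))"
    using legendre_multiplier_sequence_sum[OF assms(1)] by simp
  then show False
    using not_rr \<open>\<gamma> m = 0\<close> unfolding sum by simp
qed

lemma nontrivial_sequence_spread:
  assumes "\<not> trivial_sequence \<gamma>" "\<forall>n>k. \<gamma> n = 0"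
  obtains a c where "a + 2 \<le> c" "c \<le> k" "\<gamma> a \<noteq> 0" "\<gamma> c \<noteq> 0"
proof -
  define S where "S = {i. \<gamma> i \<noteq> 0}"
  have "S \<subseteq> {..k}"
    using assms(2) by (auto simp: S_def not_less[symmetric])
  then have "finite S"
    by (rule finite_subset) simp
  then have "3 \<le> card S"
    using assms(1) unfolding trivial_sequence_def S_def by auto
  then have "S \<noteq> {}" by auto
  have "card S \<le> card {Min S..Max S}"
    using \<open>finite S\<close> by (intro card_mono) auto
  then have "Min S + 2 \<le> Max S"
    using \<open>3 \<le> card S\<close> by simp
  moreover have "Min S \<in> S" "Max S \<in> S"
    using \<open>finite S\<close> \<open>S \<noteq> {}\<close> by auto
  ultimately show thesis
    using that \<open>S \<subseteq> {..k}\<close> unfolding S_def by blast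
qed

lemma legendre_multiplier_pos_Suc:
  assumes "\<And>k. 0 \<le> \<gamma> k" "legendre_multiplier_sequence \<gamma>" "\<not> trivial_sequence \<gamma>" "0 < \<gamma> k"
  shows "0 < \<gamma> (Suc k)"
proof (rule ccontr)
  assume "\<not> 0 < \<gamma> (Suc k)"
  then have "\<gamma> (Suc k) = 0"
    using assms(1)[of "Suc k"] by simp
  show False
  proof (cases "\<exists>n>Suc k. \<gamma> n \<noteq> 0")
    case True
    define n where "n = (LEAST n. Suc k < n \<and> \<gamma> n \<noteq> 0)"
    have n: "Suc k < n" "\<gamma> n \<noteq> 0"
      using LeastI_ex[OF True] unfolding n_def by auto
    have gap: "\<gamma> i = 0" if "Suc k < i" "i < n" for i
      using not_less_Least[of i "\<lambda>n. Suc k < n \<and> \<gamma> n \<noteq> 0"] that unfolding n_def by auto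
    show False
    proof (cases "n = Suc (Suc k)")
      case True
      then have "\<gamma> (Suc (Suc k)) * \<gamma> k \<le> \<gamma> (Suc k) ^ 2"
        using legendre_multiplier_turan(2)[OF assms(2)] assms(1)[of n] n(2) by (simp add: less_le)
      then show False
        using True n(2) assms(1)[of n] assms(4) \<open>\<gamma> (Suc k) = 0\<close> by (simp add: mult_le_0_iff less_le)
    next
      case False
      then obtain m where "n = Suc m" "k + 2 \<le> m"
        using n(1) by (cases n) auto
      then show False
        using legendre_multiplier_nonzero_before[OF assms(2), of k m] gap[of m] n assms(4) by simp
    qed
  next
    case False
    then have "\<forall>n>k. \<gamma> n = 0"
      using \<open>\<gamma> (Suc k) = 0\<close> by (metis Suc_lessI)
    then obtain a c where "a + 2 \<le> c" "c \<le> k" "\<gamma> a \<noteq> 0" "\<gamma> c \<noteq> 0"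
      using nontrivial_sequence_spread assms(3) by metis
    then show False
      using legendre_multiplier_zero_imp_sparse_below[OF assms(2) \<open>\<gamma> (Suc k) = 0\<close>, of a c] by simp
  qed
qed

theorem theorem3p6:
  fixes \<gamma> :: "nat \<Rightarrow> real"
  assumes "\<And>k. \<gamma> k \<ge> 0"
    and "legendre_multiplier_sequence \<gamma>"
    and "\<not> trivial_sequence \<gamma>"
  shows "\<forall>k. \<gamma> k \<le> \<gamma> (Suc k)"
proof
  fix k
  show "\<gamma> k \<le> \<gamma> (Suc k)"
  proof (cases "\<gamma> k = 0")
    case False
    then have "0 < \<gamma> k"
      using assms(1)[of k] by simp
    moreover from this have "0 < \<gamma> (Suc k)"
      by (rule legendre_multiplier_pos_Suc[OF assms])
    moreover from this have "0 < \<gamma> (Suc (Suc k))"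
      by (rule legendre_multiplier_pos_Suc[OF assms])
    ultimately have pos: "0 < \<gamma> k" "0 < \<gamma> (Suc k)" "0 < \<gamma> (Suc (Suc k))" .
    have "\<gamma> k ^ 2 \<le> \<gamma> (Suc (Suc k)) * \<gamma> k"
      using legendre_multiplier_turan(1)[OF assms(2) pos(3)] pos(1) by (simp add: power2_eq_square)
    also have "\<dots> \<le> \<gamma> (Suc k) ^ 2"
      using legendre_multiplier_turan(2)[OF assms(2) pos(3)] .
    finally show ?thesis
      using less_imp_le[OF pos(2)] by (rule power2_le_imp_le)
  qed (use assms(1) in simp)
qed

end
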